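(* For $\mathbf{x}=(x_1,\dots,x_N)^{\mathrm T}\in\mathbb{R}^N$ define $$\ell_{\mathrm{bbin}}(\mathbf{x})=N\sum_{n=1}^N\frac{1}{(1+x_n^2)^2}-\Big(\sum_{n=1}^N\frac{1}{1+x_n^2}\Big)^2.$$ Then $\ell_{\mathrm{bbin}}(\mathbf{x})\ge0$ for all $\mathbf{x}$, and $\ell_{\mathrm{bbin}}(\mathbf{x})=0$ if and only if $\mathbf{x}\in\{-\alpha,\alpha\}^N$ for some $\alpha\in\mathbb{R}$. Furthermore, $\ell_{\mathrm{bbin}}$ has no spurious stationary points: $\nabla\ell_{\mathrm{bbin}}(\mathbf{x})=\mathbf{0}$ holds only if $\mathbf{x}\in\{-\alpha,\alpha\}^N$ for some $\alpha\in\mathbb{R}$.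
   Context: A spurious stationary point of a differentiable function $\ell$ whose zero set is $\mathcal{X}$ is a point $\mathbf{x}\notin\mathcal{X}$ with $\nabla\ell(\mathbf{x})=\mathbf{0}$. *)

theory Defs
  imports "HOL-Analysis.Analysis"
begin

definition l_bbin :: "real ^ 'n \<Rightarrow> real" where
  "l_bbin x = real CARD('n) * (\<Sum>n\<in>UNIV. 1 / (1 + (x $ n)\<^sup>2)\<^sup>2)
              - (\<Sum>n\<in>UNIV. 1 / (1 + (x $ n)\<^sup>2))\<^sup>2"

end

theory Submission
  imports Defs
begin

text \<open>Write \<open>y\<^sub>n = g (x\<^sub>n)\<close> with \<open>g t = 1 / (1 + t\<^sup>2)\<close>. Then \<open>l_bbin x = N \<Sum> y\<^sub>n\<^sup>2 - (\<Sum> y\<^sub>n)\<^sup>2\<close>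
  is half the sum of all \<open>(y\<^sub>i - y\<^sub>j)\<^sup>2\<close>, so it is nonnegative and vanishes exactly when all
  \<open>y\<^sub>n\<close> agree, i.e. when all \<open>\<bar>x\<^sub>n\<bar>\<close> agree. Its partial derivatives are
  \<open>2 g'(x\<^sub>k) (N y\<^sub>k - \<Sum> y\<^sub>n)\<close>, and \<open>g'\<close> vanishes only at \<open>0\<close>, where \<open>g = 1\<close>. At a stationary
  point every \<open>y\<^sub>k\<close> is therefore either the mean \<open>m\<close> of the \<open>y\<^sub>n\<close> or \<open>1\<close>; since
  \<open>(y\<^sub>k - m)\<^sup>2 = (1 - m) (y\<^sub>k - m)\<close> for such values, summing over \<open>k\<close> gives
  \<open>\<Sum> (y\<^sub>k - m)\<^sup>2 = 0\<close>, and again all \<open>y\<^sub>k\<close> agree.\<close>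

definition scaled_variance :: "(real \<Rightarrow> real) \<Rightarrow> real ^ 'n \<Rightarrow> real" where
  "scaled_variance g x = real CARD('n) * (\<Sum>n\<in>UNIV. (g (x $ n))\<^sup>2) - (\<Sum>n\<in>UNIV. g (x $ n))\<^sup>2"

lemma l_bbin_eq_scaled_variance: "l_bbin = scaled_variance (\<lambda>t. 1 / (1 + t\<^sup>2))"
  by (simp add: fun_eq_iff l_bbin_def scaled_variance_def power_one_over)

lemma sum_sum_square_diff:
  fixes y :: "'a \<Rightarrow> real"
  assumes "finite A"
  shows "(\<Sum>i\<in>A. \<Sum>j\<in>A. (y i - y j)\<^sup>2) = 2 * (real (card A) * (\<Sum>i\<in>A. (y i)\<^sup>2) - (\<Sum>i\<in>A. y i)\<^sup>2)"
proof -
  have "(\<Sum>i\<in>A. \<Sum>j\<in>A. (y i - y j)\<^sup>2)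
      = (\<Sum>i\<in>A. real (card A) * (y i)\<^sup>2 + (\<Sum>j\<in>A. (y j)\<^sup>2) - 2 * y i * (\<Sum>j\<in>A. y j))"
    by (simp add: power2_diff sum.distrib sum_subtractf sum_distrib_left mult.assoc)
  also have "\<dots> = 2 * (real (card A) * (\<Sum>i\<in>A. (y i)\<^sup>2) - (\<Sum>i\<in>A. y i)\<^sup>2)"
    by (simp add: sum.distrib sum_subtractf sum_distrib_left sum_distrib_right
        power2_eq_square mult_ac)
  finally show ?thesis .
qed

lemma scaled_variance_eq_half_sum_square_diff:
  "scaled_variance g x = (\<Sum>i\<in>UNIV. \<Sum>j\<in>UNIV. (g (x $ i) - g (x $ j))\<^sup>2) / 2"
  by (simp add: sum_sum_square_diff scaled_variance_def)

lemma scaled_variance_nonneg: "scaled_variance g x \<ge> 0"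
  unfolding scaled_variance_eq_half_sum_square_diff by (simp add: sum_nonneg)

lemma scaled_variance_eq_0_iff:
  "scaled_variance g x = 0 \<longleftrightarrow> (\<forall>i j. g (x $ i) = g (x $ j))"
  unfolding scaled_variance_eq_half_sum_square_diff
  by (simp add: sum_nonneg sum_nonneg_eq_0_iff)

lemma has_derivative_vec_nth_comp:
  fixes x :: "real ^ 'n"
  assumes "(g has_real_derivative D) (at (x $ n))"
  shows "((\<lambda>x. g (x $ n)) has_derivative (\<lambda>h. D * h $ n)) (at x)"
  using has_derivative_compose[OF bounded_linear_imp_has_derivative[OF bounded_linear_vec_nth]
      assms[unfolded has_field_derivative_def]]
  by simp

lemma has_derivative_scaled_variance:
  fixes x :: "real ^ 'n"
  assumes "\<And>n. (g has_real_derivative g' (x $ n)) (at (x $ n))"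
  shows "(scaled_variance g has_derivative
    (\<lambda>h. 2 * (\<Sum>n\<in>UNIV. g' (x $ n) * (real CARD('n) * g (x $ n) - (\<Sum>m\<in>UNIV. g (x $ m))) * h $ n)))
    (at x)"
proof -
  have sum: "((\<lambda>x. \<Sum>n\<in>UNIV. g (x $ n)) has_derivative (\<lambda>h. \<Sum>n\<in>UNIV. g' (x $ n) * h $ n)) (at x)"
    by (intro has_derivative_sum has_derivative_vec_nth_comp assms)
  have sum_squares: "((\<lambda>x. \<Sum>n\<in>UNIV. (g (x $ n))\<^sup>2) has_derivative
      (\<lambda>h. \<Sum>n\<in>UNIV. 2 * g (x $ n) * g' (x $ n) * h $ n)) (at x)"
  proof (intro has_derivative_sum has_derivative_vec_nth_comp)
    fix n
    show "((\<lambda>t. (g t)\<^sup>2) has_real_derivative 2 * g (x $ n) * g' (x $ n)) (at (x $ n))"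
      using DERIV_power[OF assms, of 2] by (simp add: mult_ac)
  qed
  show ?thesis
    unfolding scaled_variance_def[abs_def]
    by (rule has_derivative_eq_rhs[OF has_derivative_diff[OF
          has_derivative_mult_right[OF sum_squares] has_derivative_power[OF sum]]])
      (simp add: fun_eq_iff sum_distrib_left sum_subtractf algebra_simps)
qed

lemma scaled_variance_stationary:
  fixes x :: "real ^ 'n"
  assumes "\<And>n. (g has_real_derivative g' (x $ n)) (at (x $ n))"
    and "GDERIV (scaled_variance g) x :> 0"
  shows "g' (x $ k) * (real CARD('n) * g (x $ k) - (\<Sum>m\<in>UNIV. g (x $ m))) = 0"
proof -
  let ?c = "\<lambda>n. g' (x $ n) * (real CARD('n) * g (x $ n) - (\<Sum>m\<in>UNIV. g (x $ m)))"
  have "(scaled_variance g has_derivative (\<lambda>h. 0)) (at x)"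
    using assms(2) by (simp add: gderiv_def)
  from has_derivative_unique[OF has_derivative_scaled_variance[OF assms(1)] this]
  have "2 * (\<Sum>n\<in>UNIV. ?c n * axis k 1 $ n) = 0"
    by (rule fun_cong)
  moreover have "(\<Sum>n\<in>UNIV. ?c n * axis k 1 $ n) = ?c k"
    by (simp add: axis_def if_distrib[of "\<lambda>t. _ * t"] cong: if_cong)
  ultimately show ?thesis by simp
qed

lemma two_valued_eq_mean:
  fixes y :: "'a \<Rightarrow> real"
  assumes "finite A" and two_valued: "\<And>j. j \<in> A \<Longrightarrow> y j = m \<or> y j = c"
    and mean: "(\<Sum>j\<in>A. y j) = real (card A) * m" and "i \<in> A"
  shows "y i = m"
proof -
  have "(\<Sum>j\<in>A. (y j - m)\<^sup>2) = (\<Sum>j\<in>A. (c - m) * (y j - m))"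
    using two_valued by (intro sum.cong) (auto simp: power2_eq_square)
  also have "\<dots> = (c - m) * ((\<Sum>j\<in>A. y j) - real (card A) * m)"
    by (simp add: sum_distrib_left[symmetric] sum_subtractf)
  finally have "(\<Sum>j\<in>A. (y j - m)\<^sup>2) = 0"
    using mean by simp
  then show ?thesis
    using \<open>finite A\<close> \<open>i \<in> A\<close> by (simp add: sum_nonneg_eq_0_iff)
qed

lemma scaled_variance_stationary_imp_constant:
  fixes x :: "real ^ 'n"
  assumes deriv: "\<And>t. (g has_real_derivative g' t) (at t)"
    and critical: "\<And>t. g' t = 0 \<Longrightarrow> g t = c"
    and "GDERIV (scaled_variance g) x :> 0"
  shows "g (x $ i) = g (x $ j)"
proof -
  define m where "m = (\<Sum>n\<in>UNIV. g (x $ n)) / real CARD('n)"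
  have two_valued: "g (x $ k) = m \<or> g (x $ k) = c" for k
  proof -
    have "g' (x $ k) = 0 \<or> real CARD('n) * g (x $ k) = (\<Sum>n\<in>UNIV. g (x $ n))"
      using scaled_variance_stationary[OF deriv assms(3), of k] by simp
    then show ?thesis
      using critical[of "x $ k"] by (auto simp: m_def eq_divide_eq mult.commute)
  qed
  have mean: "(\<Sum>n\<in>UNIV. g (x $ n)) = real (card (UNIV :: 'n set)) * m"
    by (simp add: m_def)
  have "g (x $ k) = m" for k
    using two_valued_eq_mean[of UNIV "\<lambda>n. g (x $ n)", OF _ two_valued mean] by simp
  then show ?thesis by simp
qed

lemma has_real_derivative_inverse_one_plus_square:
  "((\<lambda>t::real. 1 / (1 + t\<^sup>2)) has_real_derivative - 2 * t / (1 + t\<^sup>2)\<^sup>2) (at t)"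
proof -
  have "((\<lambda>t. 1 + t\<^sup>2) has_real_derivative 2 * t) (at t)"
    using DERIV_add[OF DERIV_const DERIV_power[OF DERIV_ident, of 2]] by simp
  moreover have "1 + t\<^sup>2 \<noteq> 0"
    by (simp add: add_pos_nonneg less_imp_neq[symmetric])
  ultimately show ?thesis
    using DERIV_inverse_fun[of "\<lambda>t. 1 + t\<^sup>2" "2 * t" t]
    by (simp add: divide_inverse flip: inverse_mult_distrib power2_eq_square)
qed

lemma inverse_one_plus_square_eq_iff:
  "1 / (1 + s\<^sup>2) = 1 / (1 + t\<^sup>2) \<longleftrightarrow> s = t \<or> s = - (t::real)"
  by (simp add: power2_eq_iff)

lemma ex_sign_pattern_iff:
  fixes x :: "real ^ 'n"
  shows "(\<exists>\<alpha>. \<forall>i. x $ i = \<alpha> \<or> x $ i = - \<alpha>) \<longleftrightarrow> (\<forall>i j. x $ i = x $ j \<or> x $ i = - x $ j)"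
  by (metis minus_minus)

theorem mainTheorem10:
  fixes x :: "real ^ 'n"
  shows "l_bbin x \<ge> 0
    \<and> (l_bbin x = 0 \<longleftrightarrow> (\<exists>\<alpha>::real. \<forall>i. x $ i = \<alpha> \<or> x $ i = - \<alpha>))
    \<and> ((GDERIV l_bbin x :> 0) \<longrightarrow> (\<exists>\<alpha>::real. \<forall>i. x $ i = \<alpha> \<or> x $ i = - \<alpha>))"
proof -
  let ?g = "\<lambda>t::real. 1 / (1 + t\<^sup>2)"
  have zero_set: "(\<forall>i j. ?g (x $ i) = ?g (x $ j)) \<longleftrightarrow> (\<exists>\<alpha>. \<forall>i. x $ i = \<alpha> \<or> x $ i = - \<alpha>)"
    unfolding inverse_one_plus_square_eq_iff ex_sign_pattern_iff ..
  have critical: "?g t = 1" if "- 2 * t / (1 + t\<^sup>2)\<^sup>2 = 0" for t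
    using that add_pos_nonneg[OF zero_less_one zero_le_power2, of t] by simp
  have stationary: "\<forall>i j. ?g (x $ i) = ?g (x $ j)" if "GDERIV (scaled_variance ?g) x :> 0"
    using scaled_variance_stationary_imp_constant[OF has_real_derivative_inverse_one_plus_square
        critical that] by blast
  show ?thesis
    unfolding l_bbin_eq_scaled_variance
  proof (intro conjI)
    show "scaled_variance ?g x \<ge> 0"
      by (rule scaled_variance_nonneg)
    show "scaled_variance ?g x = 0 \<longleftrightarrow> (\<exists>\<alpha>. \<forall>i. x $ i = \<alpha> \<or> x $ i = - \<alpha>)"
      unfolding scaled_variance_eq_0_iff by (rule zero_set)
    show "(GDERIV (scaled_variance ?g) x :> 0) \<longrightarrow> (\<exists>\<alpha>. \<forall>i. x $ i = \<alpha> \<or> x $ i = - \<alpha>)"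
      using stationary by (simp flip: zero_set)
  qed
qed

end
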